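(* Let $p$ be an odd prime and $m,r$ positive integers. Then $S_{mp^r+1}\equiv 4(mp^r+1)S_{mp^{r-1}}\pmod{p^{2r}}$.
   Context: $(S_n)_{n\ge0}$ is the integer sequence defined by $S_0=1$, $S_1=4$ and $(n+1)^2S_{n+1}=4(3n^2+3n+1)S_n-32n^2S_{n-1}$ for $n\ge1$; equivalently $S_n=\sum_{k=0}^n\binom nk\binom{2k}k\binom{2n-2k}{n-k}$. *)

theory Defs
  imports "HOL-Number_Theory.Number_Theory"
begin

definition S :: "nat \<Rightarrow> int" where
  "S n = (\<Sum>k=0..n. int (n choose k) * int ((2*k) choose k) * int ((2*n - 2*k) choose (n - k)))"

end

theory Submission
  imports Defs
begin

text \<open>
  Write S n as the sum of the terms a(n,k) = S_term n k = C(n,k) C(2k,k) C(2n-2k,n-k), and put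
  N = m p^r and n = N / p. Counting carries (Kummer) shows that p^(2r) divides a(N+1,k) unless
  k is 0 or 1 modulo p, and the symmetry k \<mapsto> N+1-k matches the terms with k = jp+1 to those
  with k = jp. For k = jp the identity (N-k+1)^2 a(N+1,k) = 2(N+1)(2(N-k)+1) a(N,k), together
  with the Jacobsthal-type congruence a(np,jp) = a(n,j) (mod p^(2r)) and p^(2r) | (N-k)^2 a(N,k),
  gives a(N+1,jp) = 2(N+1) a(n,j) (mod p^(2r)); summing over j yields 4(N+1) S n.
\<close>

section \<open>Carries in central binomial coefficients\<close>

lemma multiplicity_le_self:
  fixes p n :: nat
  assumes "prime p" "n > 0"
  shows "multiplicity p n \<le> n"
proof -
  have "multiplicity p n < 2 ^ multiplicity p n" by (rule less_exp)
  also have "\<dots> \<le> p ^ multiplicity p n" using prime_ge_2_nat[OF assms(1)] by (rule power_mono) simp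
  also have "\<dots> \<le> n" using assms(2) multiplicity_dvd[of p n] by (simp add: dvd_imp_le)
  finally show ?thesis by simp
qed

lemma card_prime_power_dvd:
  fixes p n B :: nat
  assumes "prime p" "n > 0" "n \<le> B"
  shows "card {i\<in>{1..B}. p ^ i dvd n} = multiplicity p n"
proof -
  have "p ^ i dvd n \<longleftrightarrow> i \<le> multiplicity p n" for i
    using assms by (intro power_dvd_iff_le_multiplicity) auto
  moreover have "multiplicity p n \<le> B" using multiplicity_le_self[OF assms(1,2)] assms(3) by linarith
  ultimately have "{i\<in>{1..B}. p ^ i dvd n} = {1..multiplicity p n}"
    by (simp only: set_eq_iff mem_Collect_eq atLeastAtMost_iff) linarith
  then show ?thesis by simp
qed

lemma multiplicity_fact_eq_sum_div:
  fixes p n B :: nat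
  assumes "prime p" "n \<le> B"
  shows "multiplicity p (fact n :: nat) = (\<Sum>i\<in>{1..B}. n div p ^ i)"
  using assms(2)
proof (induction n)
  case 0
  then show ?case by simp
next
  case (Suc n)
  have "Suc n div p ^ i = n div p ^ i + (if p ^ i dvd Suc n then 1 else 0)" for i
    using prime_gt_0_nat[OF assms(1)] by (simp add: div_Suc dvd_eq_mod_eq_0)
  then have sum_Suc_div: "(\<Sum>i\<in>{1..B}. Suc n div p ^ i)
      = (\<Sum>i\<in>{1..B}. if p ^ i dvd Suc n then 1 else 0) + (\<Sum>i\<in>{1..B}. n div p ^ i)"
    by (simp add: sum.distrib)
  have "multiplicity p (fact (Suc n) :: nat) = multiplicity p (Suc n * fact n)"
    by (simp only: fact_Suc of_nat_id)
  also have "\<dots> = multiplicity p (Suc n) + multiplicity p (fact n :: nat)"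
    using assms(1) by (intro prime_elem_multiplicity_mult_distrib) auto
  also have "multiplicity p (Suc n) = (\<Sum>i\<in>{1..B}. if p ^ i dvd Suc n then 1 else 0)"
    using card_prime_power_dvd[OF assms(1), of "Suc n" B] Suc.prems
    by (subst sum.inter_filter[symmetric]) auto
  also have "multiplicity p (fact n :: nat) = (\<Sum>i\<in>{1..B}. n div p ^ i)"
    using Suc by simp
  finally show ?case by (simp only: sum_Suc_div)
qed

lemma double_div:
  fixes d k :: nat
  assumes "d > 0"
  shows "(2 * k) div d = 2 * (k div d) + (if d \<le> 2 * (k mod d) then 1 else 0)"
proof -
  have "2 * k = d * (2 * (k div d)) + 2 * (k mod d)"
    by (metis add_mult_distrib2 div_mult_mod_eq mult.commute mult.left_commute)
  then have "(2 * k) div d = 2 * (k div d) + (2 * (k mod d)) div d" using assms by simp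
  moreover have "(2 * (k mod d)) div d = (if d \<le> 2 * (k mod d) then 1 else 0)"
    using mod_less_divisor[OF assms, of k] by (auto simp: div_eq_0_iff intro: div_nat_eqI)
  ultimately show ?thesis by simp
qed

text \<open>Kummer: the exponent of p in the central binomial coefficient counts the digit
  positions where doubling k produces a carry.\<close>
lemma multiplicity_central_binomial:
  fixes p k B :: nat
  assumes "prime p" "2 * k \<le> B"
  shows "multiplicity p (2 * k choose k) = card {i\<in>{1..B}. p ^ i \<le> 2 * (k mod p ^ i)}"
proof -
  have "fact (2 * k) = fact k * fact k * (2 * k choose k :: nat)"
    using binomial_fact_lemma[of k "2 * k"] by (simp add: mult_2)
  then have "multiplicity p (fact (2 * k) :: nat)
      = 2 * multiplicity p (fact k :: nat) + multiplicity p (2 * k choose k)"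
    using assms(1) by (simp add: prime_elem_multiplicity_mult_distrib)
  moreover have "multiplicity p (fact (2 * k) :: nat)
      = 2 * multiplicity p (fact k :: nat) + (\<Sum>i\<in>{1..B}. if p ^ i \<le> 2 * (k mod p ^ i) then 1 else 0)"
    using assms prime_gt_0_nat[OF assms(1)] multiplicity_fact_eq_sum_div[OF assms(1), of k B]
    by (simp add: multiplicity_fact_eq_sum_div double_div sum.distrib sum_distrib_left)
  moreover have "(\<Sum>i\<in>{1..B}. if p ^ i \<le> 2 * (k mod p ^ i) then 1 else 0)
      = card {i\<in>{1..B}. p ^ i \<le> 2 * (k mod p ^ i)}"
    by (subst sum.inter_filter[symmetric]) auto
  ultimately show ?thesis by linarith
qed

lemma less_prime_power:
  fixes p i :: nat
  assumes "prime p"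
  shows "i < p ^ i"
  using less_exp[of i] power_mono[OF prime_ge_2_nat[OF assms], of i] by linarith

text \<open>A carry modulo p^i in the addition k + l forces k or l to carry when doubled,
  so the number of such carries bounds the exponent of p.\<close>
lemma prime_power_card_dvd_central_binomial_prod:
  fixes p k l :: nat
  assumes "prime p"
    and carry: "\<And>i. i \<in> I \<Longrightarrow> i \<ge> 1 \<and> (k + l) mod p ^ i < k mod p ^ i + l mod p ^ i"
  shows "p ^ card I dvd (2 * k choose k) * (2 * l choose l)"
proof -
  define B where "B = 2 * k + 2 * l"
  define C where "C h = {i\<in>{1..B}. p ^ i \<le> 2 * (h mod p ^ i)}" for h
  have "I \<subseteq> C k \<union> C l"
  proof
    fix i assume "i \<in> I"
    note carry_i = carry[OF this]
    define d where "d = p ^ i"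
    have "d \<le> k mod d + l mod d"
    proof (rule ccontr)
      assume "\<not> d \<le> k mod d + l mod d"
      then have "(k mod d + l mod d) mod d = k mod d + l mod d" by simp
      then have "(k + l) mod d = k mod d + l mod d" by (simp only: mod_add_eq)
      then show False using carry_i unfolding d_def by simp
    qed
    then have "d \<le> 2 * (k mod d) \<or> d \<le> 2 * (l mod d)" by linarith
    moreover have "i < d" unfolding d_def using less_prime_power[OF assms(1)] .
    moreover have "k mod d \<le> k" "l mod d \<le> l" by simp_all
    ultimately have "i \<le> B" unfolding B_def by linarith
    with \<open>d \<le> 2 * (k mod d) \<or> d \<le> 2 * (l mod d)\<close> show "i \<in> C k \<union> C l"
      using carry_i unfolding C_def d_def by auto
  qed
  moreover have "finite (C h)" for h unfolding C_def by simp
  ultimately have "card I \<le> card (C k \<union> C l)" by (intro card_mono) auto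
  also have "\<dots> \<le> card (C k) + card (C l)" by (rule card_Un_le)
  also have "\<dots> = multiplicity p ((2 * k choose k) * (2 * l choose l))"
    using assms(1) multiplicity_central_binomial[OF assms(1), of _ B] unfolding C_def B_def
    by (simp add: prime_elem_multiplicity_mult_distrib)
  finally show ?thesis
    using prime_gt_1_nat[OF assms(1)] by (simp add: power_dvd_iff_le_multiplicity)
qed

lemma prime_power_dvd_binomial:
  fixes p e u n k :: nat
  assumes "prime p" "p ^ e dvd n" "\<not> p ^ (u + 1) dvd k"
  shows "p ^ (e - u) dvd (n choose k)"
proof (cases "n choose k = 0")
  case False
  have k0: "k > 0" using assms(3) by (cases k) auto
  have not_unit: "\<not> is_unit p" using prime_gt_1_nat[OF assms(1)] by simp
  have "k * (n choose k) = n * (n - 1 choose (k - 1))" using times_binomial_minus1_eq[OF k0] .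
  then have "p ^ e dvd k * (n choose k)" using assms(2) by (metis dvd_mult2)
  then have "e \<le> multiplicity p k + multiplicity p (n choose k)"
    using assms(1) k0 False
    by (simp add: power_dvd_iff_le_multiplicity[OF _ not_unit] prime_elem_multiplicity_mult_distrib)
  moreover have "multiplicity p k \<le> u"
    using power_dvd_iff_le_multiplicity[OF _ not_unit, of k "u + 1"] k0 assms(3) by simp
  ultimately show ?thesis using power_dvd_iff_le_multiplicity[OF _ not_unit] False by simp
qed (metis dvd_0_right)

section \<open>Jacobsthal's congruence\<close>

text \<open>X / Y is a p-adic unit congruent to 1 modulo p^e, phrased without division.\<close>
definition padic_ratio_cong :: "int \<Rightarrow> nat \<Rightarrow> int \<Rightarrow> int \<Rightarrow> bool" where
  "padic_ratio_cong p e X Y \<longleftrightarrow> (\<exists>U V. coprime U p \<and> X * U = Y * V \<and> [V = U] (mod p ^ e))"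

lemma padic_ratio_cong_mult:
  assumes "padic_ratio_cong p e X Y" "padic_ratio_cong p e X' Y'"
  shows "padic_ratio_cong p e (X * X') (Y * Y')"
proof -
  obtain U V U' V' where
    "coprime U p" "X * U = Y * V" "[V = U] (mod p ^ e)"
    "coprime U' p" "X' * U' = Y' * V'" "[V' = U'] (mod p ^ e)"
    using assms unfolding padic_ratio_cong_def by blast
  then have "coprime (U * U') p" "X * X' * (U * U') = Y * Y' * (V * V')"
      "[V * V' = U * U'] (mod p ^ e)"
    by (auto simp: cong_mult) (metis mult.assoc mult.left_commute)
  then show ?thesis unfolding padic_ratio_cong_def by blast
qed

lemma padic_ratio_cong_dvd:
  assumes "padic_ratio_cong p e X Y" "p ^ d dvd Y"
  shows "p ^ d dvd X"
proof -
  obtain U V where U: "coprime U p" "X * U = Y * V"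
    using assms(1) unfolding padic_ratio_cong_def by blast
  then have "p ^ d dvd X * U" using assms(2) by simp
  then show ?thesis using U(1) by (simp add: coprime_dvd_mult_left_iff coprime_commute)
qed

lemma padic_ratio_cong_imp_cong:
  assumes "padic_ratio_cong p e X Y" "p ^ d dvd Y"
  shows "[X = Y] (mod p ^ (d + e))"
proof -
  obtain U V where U: "coprime U p" "X * U = Y * V" "[V = U] (mod p ^ e)"
    using assms(1) unfolding padic_ratio_cong_def by blast
  have "p ^ d * p ^ e dvd Y * (V - U)"
    using assms(2) U(3) by (intro mult_dvd_mono) (auto simp: cong_iff_dvd_diff cong_sym_eq)
  then have "[U * X = U * Y] (mod p ^ (d + e))"
    using U(2) by (simp add: cong_iff_dvd_diff power_add algebra_simps)
  then show ?thesis using U(1) cong_mult_lcancel by (metis coprime_power_right_iff)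
qed

lemma binomial_mult_fact_eq_prod:
  "int (n + k choose k) * fact k = (\<Prod>j\<in>{1..k}. int n + int j)"
proof (induction k)
  case (Suc k)
  have "Suc k * (n + Suc k choose Suc k) = (n + Suc k) * (n + k choose k)"
    using Suc_times_binomial[of k "n + k"] by simp
  then have "int (Suc k * (n + Suc k choose Suc k)) * fact k
      = (int n + int (Suc k)) * (int (n + k choose k) * fact k)"
    by (simp only: of_nat_mult of_nat_add mult.assoc)
  then have "int (n + Suc k choose Suc k) * fact (Suc k)
      = (int n + int (Suc k)) * (int (n + k choose k) * fact k)"
    by (simp only: fact_Suc of_nat_mult ac_simps)
  also have "\<dots> = (\<Prod>j\<in>{1..Suc k}. int n + int j)"
    using Suc by (simp add: prod.nat_ivl_Suc' mult.commute)
  finally show ?case .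
qed simp

lemma prod_split_multiples:
  fixes p b :: nat and g :: "nat \<Rightarrow> 'a :: comm_monoid_mult"
  assumes "p > 0"
  shows "(\<Prod>j\<in>{1..b * p}. g j) = (\<Prod>j\<in>{j\<in>{1..b * p}. \<not> p dvd j}. g j) * (\<Prod>i\<in>{1..b}. g (i * p))"
proof -
  let ?M = "(\<lambda>i. i * p) ` {1..b}"
  have "x \<in> ?M" if "x \<in> {1..b * p}" "p dvd x" for x
  proof -
    obtain i where "x = i * p" using \<open>p dvd x\<close> by (metis dvdE mult.commute)
    then show ?thesis using that assms by auto
  qed
  then have "{1..b * p} = {j\<in>{1..b * p}. \<not> p dvd j} \<union> ?M"
    using assms by auto
  moreover have "{j\<in>{1..b * p}. \<not> p dvd j} \<inter> ?M = {}" by auto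
  ultimately have "(\<Prod>j\<in>{1..b * p}. g j) = (\<Prod>j\<in>{j\<in>{1..b * p}. \<not> p dvd j}. g j) * (\<Prod>j\<in>?M. g j)"
    by (metis (no_types, lifting) finite_Un finite_atLeastAtMost prod.union_disjoint)
  also have "(\<Prod>j\<in>?M. g j) = (\<Prod>i\<in>{1..b}. g (i * p))"
    using assms by (simp add: prod.reindex inj_on_def)
  finally show ?thesis .
qed

lemma prod_not_dvd_pairs:
  fixes p B :: nat and g :: "nat \<Rightarrow> 'a :: comm_monoid_mult"
  assumes "odd p" "p dvd B"
  defines "J \<equiv> {j\<in>{1..B}. \<not> p dvd j}"
  shows "(\<Prod>j\<in>J. g j) = (\<Prod>j\<in>{j\<in>J. 2 * j < B}. g j * g (B - j))"
proof -
  define K where "K = {j\<in>J. 2 * j < B}"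
  have reflect: "B - j \<in> J" if "j \<in> J" for j
  proof -
    have "j \<noteq> B" using that assms(2) unfolding J_def by auto
    moreover have "\<not> p dvd B - j"
      using that assms(2) dvd_diff_nat[of p B "B - j"] unfolding J_def by auto
    ultimately show ?thesis using that unfolding J_def by auto
  qed
  have no_half: "2 * j \<noteq> B" if "j \<in> J" for j
  proof
    assume "2 * j = B"
    then have "p dvd 2 * j" using assms(2) by simp
    then show False using that assms(1) unfolding J_def by (simp add: coprime_dvd_mult_right_iff)
  qed
  have "J = K \<union> (\<lambda>j. B - j) ` K"
  proof
    show "J \<subseteq> K \<union> (\<lambda>j. B - j) ` K"
    proof
      fix j assume j: "j \<in> J"
      show "j \<in> K \<union> (\<lambda>j. B - j) ` K"
      proof (cases "2 * j < B")
        case False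
        then have "B - j \<in> K" "j = B - (B - j)"
          using j reflect[OF j] no_half[OF j] unfolding K_def J_def by auto
        then show ?thesis by blast
      qed (use j in \<open>simp add: K_def\<close>)
    qed
    show "K \<union> (\<lambda>j. B - j) ` K \<subseteq> J" using reflect unfolding K_def by auto
  qed
  moreover have "K \<inter> (\<lambda>j. B - j) ` K = {}" "inj_on (\<lambda>j. B - j) K" "finite K"
    unfolding K_def J_def by (auto simp: inj_on_def)
  ultimately have "(\<Prod>j\<in>J. g j) = (\<Prod>j\<in>K. g j) * (\<Prod>j\<in>K. g (B - j))"
    by (simp add: prod.union_disjoint prod.reindex)
  then show ?thesis unfolding K_def by (simp add: prod.distrib)
qed

text \<open>Pairing j with B - j turns each factor into j (B - j) + c (c + B).\<close>
lemma prod_not_dvd_shift_cong: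
  fixes p B :: nat and c q :: int
  assumes "odd p" "p dvd B" "q dvd c * (c + int B)"
  shows "[(\<Prod>j\<in>{j\<in>{1..B}. \<not> p dvd j}. c + int j) = (\<Prod>j\<in>{j\<in>{1..B}. \<not> p dvd j}. int j)] (mod q)"
  unfolding prod_not_dvd_pairs[OF assms(1,2)]
proof (rule cong_prod)
  fix j assume "j \<in> {j\<in>{j\<in>{1..B}. \<not> p dvd j}. 2 * j < B}"
  then have "(c + int j) * (c + int (B - j)) = int j * int (B - j) + c * (c + int B)"
    by (simp add: of_nat_diff algebra_simps)
  then show "[(c + int j) * (c + int (B - j)) = int j * int (B - j)] (mod q)"
    using assms(3) by (simp add: cong_iff_dvd_diff)
qed

lemma binomial_mult_prod_eq:
  fixes p a b :: nat
  assumes "p > 0" "b \<le> a"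
  defines "J \<equiv> {j\<in>{1..b * p}. \<not> p dvd j}"
  shows "int (a * p choose b * p) * (\<Prod>j\<in>J. int j)
    = int (a choose b) * (\<Prod>j\<in>J. int ((a - b) * p) + int j)"
proof -
  define c where "c = int ((a - b) * p)"
  have "int (a * p choose b * p) * ((\<Prod>j\<in>J. int j) * (int p ^ b * fact b))
      = int (a * p choose b * p) * fact (b * p)"
    using prod_split_multiples[OF assms(1), where b = b and g = int] unfolding J_def
    by (simp add: fact_prod prod.distrib mult.commute)
  also have "\<dots> = (\<Prod>j\<in>{1..b * p}. c + int j)"
    using binomial_mult_fact_eq_prod[of "(a - b) * p" "b * p"] assms(2) unfolding c_def
    by (simp add: add_mult_distrib[symmetric])
  also have "\<dots> = (\<Prod>j\<in>J. c + int j) * (\<Prod>i\<in>{1..b}. c + int (i * p))"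
    using prod_split_multiples[OF assms(1), where b = b and g = "\<lambda>j. c + int j"]
    unfolding J_def by simp
  also have "(\<Prod>i\<in>{1..b}. c + int (i * p)) = (\<Prod>i\<in>{1..b}. int p * (int (a - b) + int i))"
    unfolding c_def of_nat_mult by (simp add: algebra_simps)
  also have "\<dots> = int p ^ b * (int (a choose b) * fact b)"
    using binomial_mult_fact_eq_prod[of "a - b" b] assms(2) by (simp add: prod.distrib)
  finally have "(int (a * p choose b * p) * (\<Prod>j\<in>J. int j)) * (int p ^ b * fact b)
      = (int (a choose b) * (\<Prod>j\<in>J. c + int j)) * (int p ^ b * fact b)"
    by (simp only: ac_simps)
  then show ?thesis unfolding c_def using assms(1) by simp
qed

lemma binomial_mult_padic_ratio_cong:
  fixes p s a b :: nat
  assumes "prime p" "odd p" "p ^ s dvd a" "p ^ s dvd b"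
  shows "padic_ratio_cong (int p) (2 * s + 2) (int (a * p choose b * p)) (int (a choose b))"
proof (cases "b \<le> a")
  case False
  moreover have "a * p < b * p" using False prime_gt_0_nat[OF assms(1)] by simp
  ultimately have "int (a * p choose b * p) * 1 = int (a choose b) * 1" by (simp add: binomial_eq_0)
  then show ?thesis unfolding padic_ratio_cong_def by (metis coprime_1_left cong_refl)
next
  case True
  define J where "J = {j\<in>{1..b * p}. \<not> p dvd j}"
  define c where "c = int ((a - b) * p)"
  have "int (a * p choose b * p) * (\<Prod>j\<in>J. int j) = int (a choose b) * (\<Prod>j\<in>J. c + int j)"
    unfolding J_def c_def using binomial_mult_prod_eq[OF prime_gt_0_nat[OF assms(1)] True] .
  moreover have "coprime (\<Prod>j\<in>J. int j) (int p)"
    unfolding J_def using prime_imp_coprime_nat[OF assms(1)]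
    by (intro prod_coprime_left) (auto simp: coprime_commute)
  moreover have "[(\<Prod>j\<in>J. c + int j) = (\<Prod>j\<in>J. int j)] (mod int p ^ (2 * s + 2))"
    unfolding J_def
  proof (rule prod_not_dvd_shift_cong[OF assms(2)])
    have "c + int (b * p) = int (a * p)"
      unfolding c_def using True by (simp add: diff_mult_distrib of_nat_diff)
    moreover have "int p ^ (s + 1) dvd int ((a - b) * p)" "int p ^ (s + 1) dvd int (a * p)"
      using assms(3,4) by (simp_all add: dvd_diff_nat mult_dvd_mono flip: of_nat_power)
    ultimately have "int p ^ (s + 1) * int p ^ (s + 1) dvd c * (c + int (b * p))"
      unfolding c_def by (simp add: mult_dvd_mono)
    moreover have "int p ^ (s + 1) * int p ^ (s + 1) = int p ^ (2 * s + 2)"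
      by (simp only: power_add[symmetric]) (simp add: mult_2)
    ultimately show "int p ^ (2 * s + 2) dvd c * (c + int (b * p))" by metis
  qed simp
  ultimately show ?thesis unfolding padic_ratio_cong_def by blast
qed

section \<open>The summands of S\<close>

definition S_term :: "nat \<Rightarrow> nat \<Rightarrow> int" where
  "S_term n k = int (n choose k) * int (2 * k choose k) * int (2 * (n - k) choose (n - k))"

lemma S_eq_sum_S_term: "S n = (\<Sum>k=0..n. S_term n k)"
  unfolding S_def S_term_def by (simp add: diff_mult_distrib2)

lemma S_term_symmetric: "k \<le> n \<Longrightarrow> S_term n (n - k) = S_term n k"
  unfolding S_term_def by (simp add: binomial_symmetric[symmetric])

lemma int_dvd_S_term_iff:
  "int d dvd S_term n k \<longleftrightarrow> d dvd (n choose k) * ((2 * k choose k) * (2 * (n - k) choose (n - k)))"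
  unfolding S_term_def by (metis of_nat_dvd_iff of_nat_mult mult.assoc)

lemma prime_power_dvd_S_term:
  fixes p e u n k :: nat
  assumes "prime p" "p ^ e dvd n" "\<not> p ^ (u + 1) dvd k" "k \<le> n"
  shows "int p ^ (2 * (e - u)) dvd S_term n k"
proof -
  have "p ^ card {u + 1..e} dvd (2 * k choose k) * (2 * (n - k) choose (n - k))"
  proof (rule prime_power_card_dvd_central_binomial_prod[OF assms(1)])
    fix i assume i: "i \<in> {u + 1..e}"
    then have "p ^ i dvd n" "\<not> p ^ i dvd k"
      using assms(2,3) le_imp_power_dvd[of "u + 1" i p] le_imp_power_dvd[of i e p]
      by (auto intro: dvd_trans)
    then show "i \<ge> 1 \<and> (k + (n - k)) mod p ^ i < k mod p ^ i + (n - k) mod p ^ i"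
      using i assms(4) by (auto simp: dvd_eq_mod_eq_0)
  qed
  then have "p ^ (e - u) * p ^ (e - u)
      dvd (n choose k) * ((2 * k choose k) * (2 * (n - k) choose (n - k)))"
    using prime_power_dvd_binomial[OF assms(1-3)] by (simp add: mult_dvd_mono)
  then show ?thesis
    by (simp add: int_dvd_S_term_iff flip: of_nat_power power_add mult_2)
qed

lemma prime_power_dvd_Suc_choose:
  fixes p r N k :: nat
  assumes "prime p" "p ^ r dvd N" "\<not> p dvd k" "\<not> p dvd k - 1"
  shows "p ^ r dvd (N + 1 choose k)"
proof -
  have k: "k > 0" using assms(3) by (cases k) auto
  have "p ^ r dvd (N + 1) * (N choose (k - 1))"
    using prime_power_dvd_binomial[OF assms(1,2), of 0 "k - 1"] assms(4) by simp
  then have "p ^ r dvd k * (N + 1 choose k)"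
    using times_binomial_minus1_eq[of k "N + 1"] k by simp
  moreover have "coprime (p ^ r) k"
    using assms(3) prime_imp_coprime_nat[OF assms(1)] by (simp add: coprime_power_left_iff)
  ultimately show ?thesis by (simp add: coprime_dvd_mult_right_iff)
qed

lemma prime_power_dvd_S_term_Suc:
  fixes p r N k :: nat
  assumes "prime p" "p ^ r dvd N" "k \<le> N + 1" "k mod p \<noteq> 0" "k mod p \<noteq> 1"
  shows "int p ^ (2 * r) dvd S_term (N + 1) k"
proof -
  have p1: "p > 1" using prime_gt_1_nat[OF assms(1)] .
  have "\<not> p dvd k - 1"
  proof
    assume "p dvd k - 1"
    moreover have "k \<ge> 1" using assms(4) by (cases k) auto
    ultimately have "k mod p = 1 mod p" using mod_eq_dvd_iff_nat[of 1 k p] by simp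
    then show False using assms(5) p1 by simp
  qed
  then have "p ^ r dvd (N + 1 choose k)"
    using prime_power_dvd_Suc_choose[OF assms(1,2)] assms(4) by (simp add: dvd_eq_mod_eq_0)
  moreover have "p ^ card {1..r} dvd (2 * k choose k) * (2 * (N + 1 - k) choose (N + 1 - k))"
  proof (rule prime_power_card_dvd_central_binomial_prod[OF assms(1)])
    fix i assume i: "i \<in> {1..r}"
    then have "p ^ i dvd N" using assms(2) le_imp_power_dvd[of i r p] by (auto intro: dvd_trans)
    moreover have "p ^ i > 1" using p1 i one_less_power[of p i] by simp
    ultimately have "(k + (N + 1 - k)) mod p ^ i = 1"
      using assms(3) by (simp add: mod_Suc dvd_eq_mod_eq_0)
    moreover have "k mod p ^ i mod p = k mod p"
      using i by (intro mod_mod_cancel) (simp add: dvd_power)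
    then have "k mod p ^ i \<ge> 2"
      using assms(4,5) p1 by (metis One_nat_def less_2_cases_iff mod_0 mod_less not_le)
    ultimately show "i \<ge> 1 \<and> (k + (N + 1 - k)) mod p ^ i < k mod p ^ i + (N + 1 - k) mod p ^ i"
      using i by auto
  qed
  ultimately have "p ^ r * p ^ r dvd (N + 1 choose k) *
      ((2 * k choose k) * (2 * (N + 1 - k) choose (N + 1 - k)))"
    by (simp add: mult_dvd_mono)
  then show ?thesis
    by (simp add: int_dvd_S_term_iff flip: of_nat_power power_add mult_2)
qed

lemma exists_truncated_multiplicity:
  fixes p j :: "'a :: comm_monoid_mult"
  shows "\<exists>t\<le>e. p ^ t dvd j \<and> (t < e \<longrightarrow> \<not> p ^ (t + 1) dvd j)"
proof (induction e)
  case (Suc e)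
  then obtain t where t: "t \<le> e" "p ^ t dvd j" "t < e \<longrightarrow> \<not> p ^ (t + 1) dvd j" by blast
  show ?case
  proof (cases "t = e \<and> p ^ (e + 1) dvd j")
    case True
    then show ?thesis by (intro exI[of _ "e + 1"]) simp
  next
    case False
    then show ?thesis using t by (intro exI[of _ t]) auto
  qed
qed simp

lemma S_term_mult_padic_ratio_cong:
  fixes p s n k :: nat
  assumes "prime p" "odd p" "p ^ s dvd n" "p ^ s dvd k"
  shows "padic_ratio_cong (int p) (2 * s + 2) (S_term (n * p) (k * p)) (S_term n k)"
proof -
  have "p ^ s dvd 2 * k" "p ^ s dvd 2 * (n - k)" using assms(3,4) by (simp_all add: dvd_diff_nat)
  then have "padic_ratio_cong (int p) (2 * s + 2)
      (int (n * p choose k * p) * int (2 * k * p choose k * p) * int (2 * (n - k) * p choose (n - k) * p))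
      (S_term n k)"
    unfolding S_term_def using assms
    by (intro padic_ratio_cong_mult binomial_mult_padic_ratio_cong) (simp_all add: dvd_diff_nat)
  then show ?thesis unfolding S_term_def by (simp add: diff_mult_distrib mult.assoc)
qed

text \<open>With t = min (v_p j) e, Jacobsthal controls the ratio modulo p^(2t+2), and the missing
  factor p^(2(e-t)) divides S_term n j by the carry count.\<close>
lemma S_term_mult_cong:
  fixes p e n j :: nat
  assumes "prime p" "odd p" "p ^ e dvd n" "j \<le> n"
  shows "[S_term (n * p) (j * p) = S_term n j] (mod int p ^ (2 * e + 2))"
    and "int p ^ (2 * e + 2) dvd int ((n - j) * p) ^ 2 * S_term (n * p) (j * p)"
proof -
  obtain t where t: "t \<le> e" "p ^ t dvd j" "t < e \<longrightarrow> \<not> p ^ (t + 1) dvd j"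
    using exists_truncated_multiplicity by blast
  have "p ^ t dvd n" using t(1) assms(3) le_imp_power_dvd dvd_trans by blast
  then have ratio: "padic_ratio_cong (int p) (2 * t + 2) (S_term (n * p) (j * p)) (S_term n j)"
    using S_term_mult_padic_ratio_cong[OF assms(1,2) _ t(2)] by blast
  have dvd: "int p ^ (2 * (e - t)) dvd S_term n j"
  proof (cases "t = e")
    case False
    then show ?thesis using prime_power_dvd_S_term[OF assms(1,3) _ assms(4)] t by simp
  qed simp
  have exponent: "2 * e + 2 = 2 * (e - t) + (2 * t + 2)" using t(1) by simp
  show "[S_term (n * p) (j * p) = S_term n j] (mod int p ^ (2 * e + 2))"
    unfolding exponent by (rule padic_ratio_cong_imp_cong[OF ratio dvd])
  have "int p ^ (t + 1) dvd int ((n - j) * p)"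
    using \<open>p ^ t dvd n\<close> t(2) by (simp add: dvd_diff_nat mult_dvd_mono flip: of_nat_power)
  then have "(int p ^ (t + 1)) ^ 2 dvd int ((n - j) * p) ^ 2" by (rule dvd_power_same)
  moreover have "(int p ^ (t + 1)) ^ 2 = int p ^ (2 * t + 2)"
    by (simp only: power_mult[symmetric]) (simp add: mult.commute)
  ultimately have "int p ^ (2 * t + 2) dvd int ((n - j) * p) ^ 2" by metis
  with padic_ratio_cong_dvd[OF ratio dvd]
  show "int p ^ (2 * e + 2) dvd int ((n - j) * p) ^ 2 * S_term (n * p) (j * p)"
    unfolding exponent power_add by (simp add: mult_dvd_mono mult.commute)
qed

lemma central_binomial_Suc:
  "Suc m * (2 * Suc m choose Suc m) = 2 * (2 * m + 1) * (2 * m choose m)"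
proof -
  have "Suc m * (2 * Suc m choose Suc m) = 2 * Suc m * (2 * m + 1 choose m)"
    using Suc_times_binomial[of m "2 * m + 1"] by simp
  also have "Suc m * (2 * m + 1 choose m) = (2 * m + 1) * (2 * m choose m)"
    using binomial_absorb_comp[of "2 * m + 1" m] by (simp add: Suc_diff_le)
  then have "2 * Suc m * (2 * m + 1 choose m) = 2 * (2 * m + 1) * (2 * m choose m)"
    by (simp only: mult.assoc)
  finally show ?thesis .
qed

lemma S_term_Suc_identity:
  fixes N k :: nat
  assumes "k \<le> N"
  shows "(int (N - k) + 1) ^ 2 * S_term (N + 1) k
    = 2 * int (N + 1) * (2 * int (N - k) + 1) * S_term N k"
proof -
  define m where "m = N - k"
  have N: "N + 1 - k = Suc m" "N - k = m" using assms unfolding m_def by auto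
  have outer: "Suc m * (N + 1 choose k) = (N + 1) * (N choose k)"
    using binomial_absorb_comp[of "N + 1" k] N by simp
  have "Suc m ^ 2 * ((N + 1 choose k) * (2 * k choose k) * (2 * Suc m choose Suc m))
      = (Suc m * (N + 1 choose k)) * (2 * k choose k) * (Suc m * (2 * Suc m choose Suc m))"
    by (simp only: power2_eq_square ac_simps)
  also have "\<dots> = 2 * (N + 1) * (2 * m + 1) * ((N choose k) * (2 * k choose k) * (2 * m choose m))"
    unfolding outer central_binomial_Suc by (simp only: ac_simps)
  finally have "int (Suc m ^ 2 * ((N + 1 choose k) * (2 * k choose k) * (2 * Suc m choose Suc m)))
      = int (2 * (N + 1) * (2 * m + 1) * ((N choose k) * (2 * k choose k) * (2 * m choose m)))"
    by (rule arg_cong)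
  then show ?thesis
    unfolding S_term_def N of_nat_mult of_nat_power of_nat_Suc of_nat_add of_nat_1 of_nat_numeral
    by (simp only: ac_simps)
qed

lemma S_term_Suc_mult_cong:
  fixes p e n j :: nat
  assumes "prime p" "odd p" "p ^ e dvd n" "j \<le> n"
  shows "[S_term (n * p + 1) (j * p) = 2 * int (n * p + 1) * S_term n j] (mod int p ^ (2 * e + 2))"
proof -
  define q where "q = int p ^ (2 * e + 2)"
  define M where "M = int ((n - j) * p)"
  define X where "X = S_term (n * p) (j * p)"
  define c where "c = 2 * int (n * p + 1)"
  have "(M + 1) ^ 2 * S_term (n * p + 1) (j * p) = c * (2 * M + 1) * X"
    using S_term_Suc_identity[of "j * p" "n * p"] assms(4)
    unfolding M_def X_def c_def by (simp add: diff_mult_distrib)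
  also have "\<dots> = c * (M + 1) ^ 2 * X - c * (M ^ 2 * X)"
    by (simp add: power2_eq_square algebra_simps)
  finally have "[(M + 1) ^ 2 * S_term (n * p + 1) (j * p) = c * (M + 1) ^ 2 * X] (mod q)"
    using S_term_mult_cong(2)[OF assms] unfolding q_def M_def X_def
    by (simp add: cong_iff_dvd_diff)
  also have "[c * (M + 1) ^ 2 * X = c * (M + 1) ^ 2 * S_term n j] (mod q)"
    using S_term_mult_cong(1)[OF assms] unfolding q_def X_def by (rule cong_scalar_left)
  also have "c * (M + 1) ^ 2 * S_term n j = (M + 1) ^ 2 * (c * S_term n j)"
    by (simp only: ac_simps)
  finally have "[(M + 1) ^ 2 * S_term (n * p + 1) (j * p) = (M + 1) ^ 2 * (c * S_term n j)] (mod q)" .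
  moreover have "coprime ((M + 1) ^ 2) q"
  proof -
    have "\<not> int p dvd M + 1"
      using prime_gt_1_nat[OF assms(1)] unfolding M_def
      by (simp add: dvd_add_right_iff zdvd_not_zless)
    then have "coprime (M + 1) (int p)"
      using assms(1) prime_imp_coprime_int[of "int p" "M + 1"] by (simp add: coprime_commute)
    then show ?thesis unfolding q_def by simp
  qed
  ultimately show ?thesis unfolding q_def c_def using cong_mult_lcancel by blast
qed

lemma atLeastAtMost_Suc_mult_residues:
  fixes p n :: nat
  assumes "p > 1"
  shows "{0..n * p + 1} = {k\<in>{0..n * p + 1}. k mod p \<noteq> 0 \<and> k mod p \<noteq> 1}
    \<union> ((\<lambda>j. j * p) ` {0..n} \<union> (\<lambda>j. j * p + 1) ` {0..n})"
    (is "_ = ?R \<union> (?K0 \<union> ?K1)")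
proof (intro equalityI subsetI)
  fix k assume k: "k \<in> {0..n * p + 1}"
  have "(n * p + 1) div p = n" using assms div_mult_self1[of p 1 n] by simp
  then have q: "k div p \<in> {0..n}" using k div_le_mono[of k "n * p + 1" p] by simp
  consider "k mod p = 0" | "k mod p = 1" | "k \<in> ?R" using k by auto
  then show "k \<in> ?R \<union> (?K0 \<union> ?K1)"
  proof cases
    case 1
    then have "k = k div p * p" using div_mult_mod_eq[of k p] by simp
    then show ?thesis using q by blast
  next
    case 2
    then have "k = k div p * p + 1" using div_mult_mod_eq[of k p] by simp
    then show ?thesis using q by blast
  qed simp
next
  fix k assume "k \<in> ?R \<union> (?K0 \<union> ?K1)"
  then consider "k \<in> ?R" | j where "j \<le> n" "k = j * p \<or> k = j * p + 1" by auto
  then show "k \<in> {0..n * p + 1}"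
  proof cases
    case (2 j)
    then show ?thesis using le_SucI[OF mult_le_mono1[of j n p]] by auto
  qed simp
qed

lemma sum_split_residues_0_1:
  fixes f :: "nat \<Rightarrow> 'a :: comm_monoid_add" and p n :: nat
  assumes "p > 1"
  shows "(\<Sum>k=0..n * p + 1. f k) = (\<Sum>k\<in>{k\<in>{0..n * p + 1}. k mod p \<noteq> 0 \<and> k mod p \<noteq> 1}. f k)
    + ((\<Sum>j=0..n. f (j * p)) + (\<Sum>j=0..n. f (j * p + 1)))"
proof -
  let ?R = "{k\<in>{0..n * p + 1}. k mod p \<noteq> 0 \<and> k mod p \<noteq> 1}"
  let ?K0 = "(\<lambda>j. j * p) ` {0..n}" and ?K1 = "(\<lambda>j. j * p + 1) ` {0..n}"
  have K0: "k mod p = 0" if "k \<in> ?K0" for k using that by auto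
  have K1: "k mod p = 1" if k: "k \<in> ?K1" for k
  proof -
    obtain j where "k = j * p + 1" using k by auto
    then show ?thesis using assms mod_mult_self1[of 1 j p] by simp
  qed
  have "(\<Sum>k=0..n * p + 1. f k) = sum f ?R + sum f (?K0 \<union> ?K1)"
    using K0 K1 by (subst (1) atLeastAtMost_Suc_mult_residues[OF assms], intro sum.union_disjoint) auto
  also have "sum f (?K0 \<union> ?K1) = sum f ?K0 + sum f ?K1"
    using K0 K1 by (intro sum.union_disjoint) (auto simp: disjoint_iff, fastforce)
  also have "sum f ?K0 = (\<Sum>j=0..n. f (j * p))"
    using assms by (simp add: sum.reindex inj_on_def)
  also have "sum f ?K1 = (\<Sum>j=0..n. f (j * p + 1))"
    using assms by (simp add: sum.reindex inj_on_def)
  finally show ?thesis .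
qed

lemma sum_S_term_Suc_mult_shift:
  "(\<Sum>j=0..n. S_term (n * p + 1) (j * p + 1)) = (\<Sum>j=0..n. S_term (n * p + 1) (j * p))"
proof -
  have "(\<Sum>j=0..n. S_term (n * p + 1) (j * p + 1)) = (\<Sum>j=0..n. S_term (n * p + 1) ((n - j) * p))"
  proof (rule sum.cong[OF refl])
    fix j assume "j \<in> {0..n}"
    then have "j * p + 1 \<le> n * p + 1" "n * p + 1 - (j * p + 1) = (n - j) * p"
      by (simp_all add: diff_mult_distrib)
    then show "S_term (n * p + 1) (j * p + 1) = S_term (n * p + 1) ((n - j) * p)"
      using S_term_symmetric by metis
  qed
  also have "\<dots> = (\<Sum>j=0..n. S_term (n * p + 1) (j * p))"
    using sum.atLeastAtMost_rev[of "\<lambda>j. S_term (n * p + 1) (j * p)" 0 n] by simp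
  finally show ?thesis .
qed

theorem theorem3p2:
  fixes p m r :: nat
  assumes "prime p" and "odd p" and "m > 0" and "r > 0"
  shows "[S (m * p ^ r + 1) = 4 * int (m * p ^ r + 1) * S (m * p ^ (r - 1))] (mod int p ^ (2 * r))"
proof -
  define n where "n = m * p ^ (r - 1)"
  have N: "m * p ^ r = n * p" and r: "2 * r = 2 * (r - 1) + 2"
    using assms(4) unfolding n_def by (simp_all add: power_eq_if)
  let ?f = "S_term (n * p + 1)"
  let ?R = "{k\<in>{0..n * p + 1}. k mod p \<noteq> 0 \<and> k mod p \<noteq> 1}"
  have "int p ^ (2 * r) dvd (\<Sum>k\<in>?R. ?f k)"
    using prime_power_dvd_S_term_Suc[OF assms(1), of r "n * p"] N[symmetric]
    by (intro dvd_sum) auto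
  moreover have "[(\<Sum>j=0..n. ?f (j * p)) = 2 * int (n * p + 1) * S n] (mod int p ^ (2 * r))"
    unfolding S_eq_sum_S_term sum_distrib_left r
    by (intro cong_sum S_term_Suc_mult_cong[OF assms(1,2)]) (auto simp: n_def)
  ultimately have "[(\<Sum>k\<in>?R. ?f k) + ((\<Sum>j=0..n. ?f (j * p)) + (\<Sum>j=0..n. ?f (j * p)))
      = 0 + (2 * int (n * p + 1) * S n + 2 * int (n * p + 1) * S n)] (mod int p ^ (2 * r))"
    by (intro cong_add) (auto simp: cong_0_iff)
  then show ?thesis
    unfolding N n_def[symmetric] S_eq_sum_S_term
      sum_split_residues_0_1[OF prime_gt_1_nat[OF assms(1)]] sum_S_term_Suc_mult_shift
    by (simp add: algebra_simps)
qed

end
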